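(* Let $n\ge2$, $\gamma\in(0,1)$, $\lambda\in\mathbb R$, $\Sigma_\lambda=\{(t,\theta)\in\mathcal C:t<\lambda\}$, and for $z=(t,\theta)$ let $z^\lambda=(2\lambda-t,\theta)$. Let $f:\mathbb R\to\mathbb R$ satisfy $f(s)\geq0$ for $s\geq0$. Let $v$ be a function on $\mathcal C$ with $P_\gamma v=f(v)$ in $\Sigma_\lambda$, $v\geq0$ in $\Sigma_\lambda$, and $v$ anti-symmetric with respect to $\partial\Sigma_\lambda$, i.e. $v(z^\lambda)=-v(z)$. Then either $v\equiv0$ or $v>0$ in $\Sigma_\lambda$.
   Context: $\mathcal C=\mathbb R\times\mathbb S^{n-1}$ with $d\mu=dt\,d\theta$. $K(t,\tilde t,\theta,\tilde\theta)=\frac{e^{-\frac{n+2\gamma}{2}|t-\tilde t|}}{(1+e^{-2|t-\tilde t|}-2e^{-|t-\tilde t|}\langle\theta,\tilde\theta\rangle)^{\frac{n+2\gamma}{2}}}$, $\varsigma_{n,\gamma}=\pi^{-n/2}2^{2\gamma}\frac{\Gamma(\frac n2+\gamma)}{\Gamma(1-\gamma)}\gamma$, $c_{n,\gamma}=2^{2\gamma}\Big(\frac{\Gamma(\frac12(\frac n2+\gamma))}{\Gamma(\frac12(\frac n2-\gamma))}\Big)^2$, and $P_\gamma v(t,\theta)=\varsigma_{n,\gamma}\mathrm{P.V.}\int_{\mathcal C}K(t,\tilde t,\theta,\tilde\theta)(v(t,\theta)-v(\tilde t,\tilde\theta))d\tilde\mu+c_{n,\gamma}v(t,\theta)$. 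*)

theory Defs
  imports "HOL-Analysis.Analysis"
begin

text \<open>The cylinder C = R x S^{n-1}, with S^{n-1} the unit sphere of real^'n, n = CARD('n).\<close>

definition cyl :: "(real \<times> (real^'n)) set" where
  "cyl = UNIV \<times> sphere 0 1"

text \<open>Standard surface measure on the unit sphere, via the cone construction:
  sigma(A) = n * Lebesgue measure of {r x. 0 < r <= 1, x in A}, i.e. n times the
  push-forward of Lebesgue measure on the punctured unit ball under x |-> x/|x|.\<close>

definition sphere_measure :: "(real^'n) measure" where
  "sphere_measure = scale_measure (of_nat CARD('n))
     (distr (restrict_space lborel (cball 0 1 - {0})) (restrict_space borel (sphere 0 1)) sgn)"

definition cyl_measure :: "(real \<times> (real^'n)) measure" where
  "cyl_measure = lborel \<Otimes>\<^sub>M sphere_measure"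

definition kernelK :: "real \<Rightarrow> real \<times> (real^'n) \<Rightarrow> real \<times> (real^'n) \<Rightarrow> real" where
  "kernelK \<gamma> z w =
     (let t = fst z; \<theta> = snd z; s = fst w; \<eta> = snd w; a = (real CARD('n) + 2 * \<gamma>) / 2 in
      exp (- a * \<bar>t - s\<bar>) /
      (1 + exp (- 2 * \<bar>t - s\<bar>) - 2 * exp (- \<bar>t - s\<bar>) * (\<theta> \<bullet> \<eta>)) powr a)"

definition varsigma :: "nat \<Rightarrow> real \<Rightarrow> real" where
  "varsigma n \<gamma> = pi powr (- real n / 2) * 2 powr (2 * \<gamma>) *
     (Gamma (real n / 2 + \<gamma>) / Gamma (1 - \<gamma>)) * \<gamma>"

definition cconst :: "nat \<Rightarrow> real \<Rightarrow> real" where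
  "cconst n \<gamma> = 2 powr (2 * \<gamma>) *
     (Gamma ((real n / 2 + \<gamma>) / 2) / Gamma ((real n / 2 - \<gamma>) / 2)) ^ 2"

definition pv_integrand :: "real \<Rightarrow> (real \<times> (real^'n) \<Rightarrow> real) \<Rightarrow> real \<times> (real^'n) \<Rightarrow> real \<times> (real^'n) \<Rightarrow> real" where
  "pv_integrand \<gamma> v z w = kernelK \<gamma> z w * (v z - v w)"

definition pv_trunc :: "real \<Rightarrow> (real \<times> (real^'n) \<Rightarrow> real) \<Rightarrow> real \<times> (real^'n) \<Rightarrow> real \<Rightarrow> real" where
  "pv_trunc \<gamma> v z \<epsilon> =
     set_lebesgue_integral cyl_measure {w. \<epsilon> < dist z w} (pv_integrand \<gamma> v z)"

text \<open>(P_gamma v)(z) is well defined (the P.V. integral exists) and equals L.\<close>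

definition Pgamma_at :: "real \<Rightarrow> (real \<times> (real^'n) \<Rightarrow> real) \<Rightarrow> real \<times> (real^'n) \<Rightarrow> real \<Rightarrow> bool" where
  "Pgamma_at \<gamma> v z L \<longleftrightarrow>
     (\<forall>\<epsilon>>0. set_integrable cyl_measure {w. \<epsilon> < dist z w} (pv_integrand \<gamma> v z)) \<and>
     (\<exists>I. ((\<lambda>\<epsilon>. pv_trunc \<gamma> v z \<epsilon>) \<longlongrightarrow> I) (at_right 0) \<and>
          L = varsigma CARD('n) \<gamma> * I + cconst CARD('n) \<gamma> * v z)"

definition Sigma_lam :: "real \<Rightarrow> (real \<times> (real^'n)) set" where
  "Sigma_lam lam = {z \<in> cyl. fst z < lam}"

definition reflect :: "real \<Rightarrow> real \<times> (real^'n) \<Rightarrow> real \<times> (real^'n)" where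
  "reflect lam z = (2 * lam - fst z, snd z)"

end

theory Submission
  imports Defs
begin

(* Suppose v vanishes at some z in Sigma_lam but is positive at z1 in Sigma_lam.  Folding the
   principal-value integral at z across the plane t = lam with the antisymmetry of v turns it into
   an integral over Sigma_lam of (K(z,u) - K(z,u^lam)) v(u), where K(z,u^lam) < K(z,u) because
   reflection moves u further from z in the t-direction.  Away from z this integrand is
   nonnegative and, near z1, strictly positive on a set of positive measure; the part where
   only the reflected point survives the truncation lies in a slab |t - t_z| <= eps and costs
   O(eps).  Hence the truncated integrals of v(z) - v stay below a negative constant, so
   P_gamma v(z) < 0 <= f(0) = f(v(z)), a contradiction. *)

section \<open>Measures on the cylinder\<close>

lemma integral_pos_of_pos_on:
  fixes f :: "'a \<Rightarrow> real"
  assumes "integrable M f" "\<And>x. x \<in> space M \<Longrightarrow> 0 \<le> f x"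
    and "A \<in> sets M" "0 < emeasure M A" "\<And>x. x \<in> A \<Longrightarrow> 0 < f x"
  shows "0 < integral\<^sup>L M f"
proof -
  have "integral\<^sup>L M f \<noteq> 0"
  proof
    assume "integral\<^sup>L M f = 0"
    then have "AE x in M. f x = 0"
      using integral_nonneg_eq_0_iff_AE[OF assms(1)] assms(2) by (simp add: AE_I2)
    then have "AE x in M. x \<notin> A"
      by eventually_elim (use assms(5) in force)
    then show False
      using assms(3,4) sets.sets_into_space[OF assms(3)]
      by (simp add: AE_iff_measurable[OF _ refl] Int_absorb1 flip: Int_def)
  qed
  then show ?thesis
    using Bochner_Integration.integral_nonneg[OF assms(2)] by (simp add: order_less_le)
qed

lemma space_sphere_measure [simp]: "space (sphere_measure :: (real^'n) measure) = sphere 0 1"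
  by (simp add: sphere_measure_def space_restrict_space space_scale_measure)

lemma sphere_in_sets_sphere_measure [simp]: "sphere 0 1 \<in> sets (sphere_measure :: (real^'n) measure)"
  using sets.top[of "sphere_measure :: (real^'n) measure"] by simp

lemma sets_sphere_measure:
  "sets (sphere_measure :: (real^'n) measure) = sets (restrict_space borel (sphere 0 1))"
  by (simp add: sphere_measure_def)

lemma emeasure_sphere_measure:
  assumes "A \<in> sets (sphere_measure :: (real^'n) measure)"
  shows "emeasure sphere_measure A = of_nat CARD('n) * emeasure lborel (sgn -` A \<inter> (cball 0 1 - {0}))"
proof -
  let ?B = "restrict_space lborel (cball (0::real^'n) 1 - {0})"
  have sgn_meas: "sgn \<in> measurable ?B (restrict_space borel (sphere 0 1))"
    by (rule measurable_restrict_space3) (auto simp: norm_sgn)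
  then have "sgn -` A \<inter> space ?B \<in> sets ?B"
    using assms by (intro measurable_sets) (auto simp: sets_sphere_measure)
  then have "emeasure ?B (sgn -` A \<inter> space ?B) = emeasure lborel (sgn -` A \<inter> (cball 0 1 - {0}))"
    by (subst emeasure_restrict_space) (auto simp: space_restrict_space)
  with sgn_meas assms show ?thesis
    unfolding sphere_measure_def by (simp add: emeasure_scale_measure emeasure_distr sets_sphere_measure)
qed

lemma emeasure_sphere_measure_finite: "emeasure (sphere_measure :: (real^'n) measure) (sphere 0 1) < \<infinity>"
proof -
  have "emeasure (sphere_measure :: (real^'n) measure) (sphere 0 1) \<le> of_nat CARD('n) * emeasure lborel (cball (0::real^'n) 1)"
    by (auto simp: emeasure_sphere_measure intro!: mult_left_mono emeasure_mono)
  also have "\<dots> < \<infinity>"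
    using emeasure_lborel_cball_finite[of "0::real^'n" 1] by (simp add: ennreal_mult_less_top of_nat_less_top)
  finally show ?thesis .
qed

interpretation sphere_measure: finite_measure "sphere_measure :: (real^'n) measure"
  using emeasure_sphere_measure_finite by (intro finite_measureI) (simp add: less_top)

lemma emeasure_sphere_cap_pos:
  fixes \<theta> :: "real^'n"
  assumes "norm \<theta> = 1" "0 < \<rho>"
  shows "0 < emeasure sphere_measure (sphere 0 1 \<inter> ball \<theta> \<rho>)"
proof -
  define r where "r = min (1/4) (\<rho>/4)"
  have r: "0 < r" "r \<le> 1/4" "4 * r \<le> \<rho>" using assms by (auto simp: r_def)
  have cone: "ball (\<theta> /\<^sub>R 2) r \<subseteq> sgn -` (sphere 0 1 \<inter> ball \<theta> \<rho>) \<inter> (cball 0 1 - {0})"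
  proof
    fix x assume "x \<in> ball (\<theta> /\<^sub>R 2) r"
    then have d: "norm (x - \<theta> /\<^sub>R 2) < r" by (simp add: dist_norm norm_minus_commute)
    have nx: "\<bar>norm x - 1/2\<bar> < r"
      using norm_triangle_ineq3[of x "\<theta> /\<^sub>R 2"] d assms(1) by simp
    then have x0: "0 < norm x" "norm x \<le> 1" using r by auto
    have "sgn x - \<theta> = (inverse (norm x) - 2) *\<^sub>R x + 2 *\<^sub>R (x - \<theta> /\<^sub>R 2)"
      by (simp add: sgn_div_norm algebra_simps)
    then have "norm (sgn x - \<theta>) \<le> \<bar>inverse (norm x) - 2\<bar> * norm x + 2 * norm (x - \<theta> /\<^sub>R 2)"
      by (metis norm_triangle_ineq norm_scaleR abs_numeral)
    also have "\<bar>inverse (norm x) - 2\<bar> * norm x = \<bar>1 - 2 * norm x\<bar>"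
    proof -
      have "(inverse (norm x) - 2) * norm x = 1 - 2 * norm x"
        using x0 by (simp add: left_diff_distrib)
      then show ?thesis by (metis abs_mult abs_norm_cancel)
    qed
    finally have "norm (sgn x - \<theta>) < \<rho>" using nx d r by linarith
    then show "x \<in> sgn -` (sphere 0 1 \<inter> ball \<theta> \<rho>) \<inter> (cball 0 1 - {0})"
      using x0 by (auto simp: norm_sgn dist_norm norm_minus_commute)
  qed
  have cap: "sphere 0 1 \<inter> ball \<theta> \<rho> \<in> sets sphere_measure"
    by (auto simp: sets_sphere_measure sets_restrict_space)
  have "0 < emeasure lborel (ball (\<theta> /\<^sub>R 2) r)"
    using content_ball_pos[OF r(1), of "\<theta> /\<^sub>R 2"] emeasure_lborel_ball_finite[of "\<theta> /\<^sub>R 2" r]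
    by (simp add: measure_def enn2real_positive_iff)
  also have "\<dots> \<le> emeasure lborel (sgn -` (sphere 0 1 \<inter> ball \<theta> \<rho>) \<inter> (cball 0 1 - {0}))"
    using cone measurable_sets[OF borel_measurable_sgn, of "sphere 0 1 \<inter> ball \<theta> \<rho>"]
    by (intro emeasure_mono) auto
  finally show ?thesis
    by (simp add: emeasure_sphere_measure[OF cap] ennreal_zero_less_mult_iff)
qed

lemma space_cyl_measure [simp]: "space (cyl_measure :: (real \<times> (real^'n)) measure) = cyl"
  by (simp add: cyl_measure_def space_pair_measure cyl_def)

lemma Times_in_sets_cyl_measure:
  assumes "A \<in> sets borel" "B \<in> sets (sphere_measure :: (real^'n) measure)"
  shows "A \<times> B \<in> sets (cyl_measure :: (real \<times> (real^'n)) measure)"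
  unfolding cyl_measure_def using assms by (intro pair_measureI) auto

lemma emeasure_cyl_measure_Times:
  assumes "A \<in> sets borel" "B \<in> sets (sphere_measure :: (real^'n) measure)"
  shows "emeasure (cyl_measure :: (real \<times> (real^'n)) measure) (A \<times> B) = emeasure lborel A * emeasure sphere_measure B"
  unfolding cyl_measure_def using assms by (intro sphere_measure.emeasure_pair_measure_Times) auto

lemma distr_cyl_measure_reflect:
  "distr (cyl_measure :: (real \<times> (real^'n)) measure) cyl_measure (reflect lam) = cyl_measure"
proof -
  have line: "distr lborel lborel (\<lambda>t::real. 2 * lam - t) = lborel"
  proof -
    have "distr lborel lborel (\<lambda>t::real. 2 * lam - t) = distr (distr lborel borel uminus) borel ((+) (2 * lam))"
      by (subst distr_distr) (auto intro!: distr_cong)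
    then show ?thesis by (simp add: lborel_distr_uminus lborel_distr_plus)
  qed
  have "(cyl_measure :: (real \<times> (real^'n)) measure) =
      distr lborel lborel (\<lambda>t::real. 2 * lam - t) \<Otimes>\<^sub>M distr sphere_measure sphere_measure (\<lambda>x. x)"
    by (simp add: line cyl_measure_def distr_id)
  also have "\<dots> = distr cyl_measure cyl_measure (\<lambda>(t, \<theta>). (2 * lam - t, \<theta>))"
    unfolding cyl_measure_def
    by (rule pair_measure_distr) (auto simp: distr_id intro: sphere_measure.sigma_finite_measure_axioms)
  also have "\<dots> = distr cyl_measure cyl_measure (reflect lam)"
    by (intro distr_cong) (auto simp: reflect_def)
  finally show ?thesis by simp
qed

lemma reflect_measurable [measurable]:
  "reflect lam \<in> measurable (cyl_measure :: (real \<times> (real^'n)) measure) cyl_measure"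
  unfolding reflect_def cyl_measure_def by measurable

lemma integral_cyl_measure_reflect:
  fixes g :: "real \<times> (real^'n) \<Rightarrow> real"
  assumes "integrable cyl_measure g"
  shows "integrable cyl_measure (\<lambda>u. g (reflect lam u))"
    and "integral\<^sup>L cyl_measure (\<lambda>u. g (reflect lam u)) = integral\<^sup>L cyl_measure g"
  using integrable_distr_eq[OF reflect_measurable, of g] integral_distr[OF reflect_measurable, of g] assms
  by (simp_all add: distr_cyl_measure_reflect)

lemma borel_measurable_dist_cyl [measurable]:
  "(\<lambda>w. dist z w) \<in> borel_measurable (cyl_measure :: (real \<times> (real^'n)) measure)"
proof -
  have "(\<lambda>\<theta>. dist (snd z) \<theta>) \<in> borel_measurable (sphere_measure :: (real^'n) measure)"
    unfolding measurable_cong_sets[OF sets_sphere_measure refl]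
    by (intro measurable_restrict_space1) measurable
  then show ?thesis
    unfolding cyl_measure_def dist_prod_def by measurable
qed

lemma Sigma_lam_eq: "Sigma_lam lam = {..<lam} \<times> sphere (0::real^'n) 1"
  by (auto simp: Sigma_lam_def cyl_def)

lemma Sigma_lam_in_sets: "Sigma_lam lam \<in> sets (cyl_measure :: (real \<times> (real^'n)) measure)"
  unfolding Sigma_lam_eq by (intro Times_in_sets_cyl_measure) auto

lemma integral_cyl_measure_fold:
  fixes h :: "real \<times> (real^'n) \<Rightarrow> real"
  assumes h: "integrable cyl_measure h"
  shows "integrable cyl_measure (\<lambda>u. indicator (Sigma_lam lam) u * (h u + h (reflect lam u)))"
    (is "integrable _ ?h'")
    and "integral\<^sup>L cyl_measure h =
      integral\<^sup>L cyl_measure (\<lambda>u. indicator (Sigma_lam lam) u * (h u + h (reflect lam u)))"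
proof -
  let ?M = "cyl_measure :: (real \<times> (real^'n)) measure"
  let ?S = "Sigma_lam lam :: (real \<times> (real^'n)) set"
  define S' where "S' = reflect lam -` ?S \<inter> space ?M"
  have S': "S' \<in> sets ?M"
    unfolding S'_def by (rule measurable_sets[OF reflect_measurable Sigma_lam_in_sets])
  have hS: "integrable ?M (\<lambda>u. indicator ?S u * h u)"
    using integrable_mult_indicator[OF Sigma_lam_in_sets h] by simp
  have hS': "integrable ?M (\<lambda>u. indicator S' u * h u)"
    using integrable_mult_indicator[OF S' h] by simp
  have reflect_S': "indicator S' (reflect lam u) = (indicator ?S u :: real)" for u
    by (cases u) (auto simp: S'_def Sigma_lam_def reflect_def indicator_def cyl_def)
  have hRS: "integrable ?M (\<lambda>u. indicator ?S u * h (reflect lam u))"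
    and hRS_eq: "integral\<^sup>L ?M (\<lambda>u. indicator ?S u * h (reflect lam u)) = integral\<^sup>L ?M (\<lambda>u. indicator S' u * h u)"
    using integral_cyl_measure_reflect[OF hS', of lam] by (simp_all add: reflect_S')
  show "integrable ?M ?h'"
    using hS hRS by (simp add: distrib_left)
  have "{lam} \<times> sphere (0::real^'n) 1 \<in> null_sets ?M"
    by (auto simp: null_sets_def emeasure_cyl_measure_Times intro: Times_in_sets_cyl_measure)
  then have "AE u in ?M. h u = indicator ?S u * h u + indicator S' u * h u"
    by (rule AE_I') (auto simp: Sigma_lam_def S'_def reflect_def indicator_def cyl_def)
  then have "integral\<^sup>L ?M h = integral\<^sup>L ?M (\<lambda>u. indicator ?S u * h u + indicator S' u * h u)"
    using h hS hS' by (intro integral_cong_AE) auto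
  also have "\<dots> = integral\<^sup>L ?M (\<lambda>u. indicator ?S u * h u) + integral\<^sup>L ?M (\<lambda>u. indicator S' u * h u)"
    using hS hS' by (rule Bochner_Integration.integral_add)
  also have "\<dots> = integral\<^sup>L ?M ?h'"
    using hS hRS hRS_eq by (simp add: distrib_left)
  finally show "integral\<^sup>L ?M h = integral\<^sup>L ?M ?h'" .
qed

definition cyl_slab :: "real \<Rightarrow> real \<Rightarrow> (real \<times> (real^'n)) set" where
  "cyl_slab t r = {t - r..t + r} \<times> sphere 0 1"

definition cyl_box :: "real \<times> (real^'n) \<Rightarrow> real \<Rightarrow> (real \<times> (real^'n)) set" where
  "cyl_box z r = {fst z - r<..<fst z + r} \<times> (sphere 0 1 \<inter> ball (snd z) r)"

lemma cyl_slab_in_sets: "cyl_slab t r \<in> sets (cyl_measure :: (real \<times> (real^'n)) measure)"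
  unfolding cyl_slab_def by (intro Times_in_sets_cyl_measure) auto

lemma emeasure_cyl_slab:
  assumes "0 \<le> r"
  shows "emeasure (cyl_measure :: (real \<times> (real^'n)) measure) (cyl_slab t r) =
    ennreal (2 * r) * emeasure sphere_measure (sphere (0::real^'n) 1)"
  unfolding cyl_slab_def using assms by (subst emeasure_cyl_measure_Times) auto

lemma emeasure_cyl_slab_finite:
  "0 \<le> r \<Longrightarrow> emeasure (cyl_measure :: (real \<times> (real^'n)) measure) (cyl_slab t r) < \<infinity>"
  using emeasure_sphere_measure_finite[where 'n='n]
  by (simp add: emeasure_cyl_slab ennreal_mult_less_top)

lemma measure_cyl_slab:
  "0 \<le> r \<Longrightarrow> measure (cyl_measure :: (real \<times> (real^'n)) measure) (cyl_slab t r) =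
    2 * r * measure sphere_measure (sphere (0::real^'n) 1)"
  by (simp add: measure_def emeasure_cyl_slab enn2real_mult)

lemma cyl_slab_subset: "cyl_slab t r \<subseteq> cyl"
  by (auto simp: cyl_slab_def cyl_def)

lemma mem_cyl_slab: "u \<in> cyl \<Longrightarrow> dist z u \<le> r \<Longrightarrow> u \<in> cyl_slab (fst z) r"
  using dist_fst_le[of z u] by (auto simp: cyl_slab_def cyl_def dist_real_def)

lemma cyl_box_in_sets: "cyl_box z r \<in> sets (cyl_measure :: (real \<times> (real^'n)) measure)"
  unfolding cyl_box_def
  by (intro Times_in_sets_cyl_measure) (auto simp: sets_sphere_measure sets_restrict_space)

lemma emeasure_cyl_box_pos:
  fixes z :: "real \<times> (real^'n)"
  assumes "z \<in> cyl" "0 < r"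
  shows "0 < emeasure cyl_measure (cyl_box z r)"
  using assms emeasure_sphere_cap_pos[of "snd z" r]
  by (auto simp: cyl_box_def cyl_def emeasure_cyl_measure_Times sets_sphere_measure sets_restrict_space
      ennreal_zero_less_mult_iff)

lemma cyl_box_subset: "cyl_box z r \<subseteq> cyl \<inter> ball z (2 * r)"
proof
  fix u assume u: "u \<in> cyl_box z r"
  have "dist z u \<le> dist z (fst u, snd z) + dist (fst u, snd z) u"
    by (rule dist_triangle)
  also have "\<dots> < 2 * r"
    using u by (cases z, cases u) (auto simp: cyl_box_def dist_Pair_Pair dist_real_def abs_less_iff)
  finally show "u \<in> cyl \<inter> ball z (2 * r)"
    using u by (auto simp: cyl_box_def cyl_def)
qed

lemma bounded_above_on_cyl_slab:
  assumes "continuous_on cyl v"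
  shows "\<exists>B\<ge>0. \<forall>w\<in>cyl_slab t r. v w \<le> (B::real)"
proof -
  have "compact (cyl_slab t r :: (real \<times> (real^'n)) set)"
    unfolding cyl_slab_def by (intro compact_Times compact_Icc compact_sphere)
  then have "bounded (v ` cyl_slab t r)"
    using assms cyl_slab_subset
    by (intro compact_imp_bounded compact_continuous_image) (auto intro: continuous_on_subset)
  then obtain B where "\<forall>w\<in>cyl_slab t r. norm (v w) \<le> B"
    by (auto simp: bounded_iff)
  then show ?thesis
    by (intro exI[of _ "max B 0"]) force
qed

section \<open>The kernel\<close>

lemma inner_unit_le_1:
  fixes x y :: "'a::real_inner"
  assumes "norm x = 1" "norm y = 1"
  shows "x \<bullet> y \<le> 1"
  using Cauchy_Schwarz_ineq2[of x y] assms by simp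

lemma inner_unit_eq_1_iff:
  fixes x y :: "'a::real_inner"
  assumes "norm x = 1" "norm y = 1"
  shows "x \<bullet> y = 1 \<longleftrightarrow> x = y"
proof
  assume "x \<bullet> y = 1"
  moreover have "x \<bullet> x = 1" "y \<bullet> y = 1"
    using assms by (simp_all flip: power2_norm_eq_inner)
  ultimately have "norm (x - y) ^ 2 = 0"
    by (simp add: power2_norm_eq_inner inner_diff inner_commute)
  then show "x = y" by simp
qed (use assms in \<open>simp add: dot_square_norm\<close>)

(* Valid also at z = w: both sides are then 0 because 0 powr a = 0 and x / 0 = 0. *)
lemma kernelK_eq_cosh:
  fixes z w :: "real \<times> (real^'n)"
  shows "kernelK \<gamma> z w =
    (2 * (cosh (fst z - fst w) - snd z \<bullet> snd w)) powr (- (real CARD('n) + 2 * \<gamma>) / 2)"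
proof -
  define a where "a = (real CARD('n) + 2 * \<gamma>) / 2"
  define r where "r = \<bar>fst z - fst w\<bar>"
  define D where "D = 2 * (cosh r - snd z \<bullet> snd w)"
  have "exp (- r) * (exp r + exp (- r)) = 1 + exp (- 2 * r)"
    by (simp add: algebra_simps flip: exp_add)
  then have "1 + exp (- 2 * r) - 2 * exp (- r) * (snd z \<bullet> snd w) = exp (- r) * D"
    by (simp add: D_def cosh_field_def algebra_simps)
  moreover have "(exp (- r) * D) powr a = exp (- a * r) * D powr a"
    unfolding powr_mult exp_powr_real by (simp add: mult.commute)
  ultimately have "(1 + exp (- 2 * r) - 2 * exp (- r) * (snd z \<bullet> snd w)) powr a = exp (- a * r) * D powr a"
    by simp
  then have "kernelK \<gamma> z w = exp (- a * r) / (exp (- a * r) * D powr a)"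
    by (simp add: kernelK_def Let_def a_def r_def)
  also have "\<dots> = D powr (- a)"
    by (simp add: powr_minus divide_inverse)
  finally show ?thesis
    by (simp add: D_def r_def a_def minus_divide_left)
qed

lemma kernelK_nonneg: "0 \<le> kernelK \<gamma> z w"
  by (simp add: kernelK_def Let_def)

lemma kernelK_le_of_fst_dist:
  fixes z w :: "real \<times> (real^'n)"
  assumes "z \<in> cyl" "w \<in> cyl" "0 \<le> \<gamma>" "0 < r" "r \<le> \<bar>fst z - fst w\<bar>"
  shows "kernelK \<gamma> z w \<le> (2 * (cosh r - 1)) powr (- (real CARD('n) + 2 * \<gamma>) / 2)"
proof -
  have "cosh 0 < cosh r"
    using assms(4) by (subst cosh_real_nonneg_less_iff) auto
  moreover have "cosh r \<le> cosh \<bar>fst z - fst w\<bar>"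
    using assms(4,5) by (subst cosh_real_nonneg_le_iff) auto
  moreover have "snd z \<bullet> snd w \<le> 1"
    using assms(1,2) by (intro inner_unit_le_1) (auto simp: cyl_def)
  ultimately show ?thesis
    unfolding kernelK_eq_cosh using assms(3) by (intro powr_mono2') auto
qed

lemma kernelK_reflect_less:
  fixes z u :: "real \<times> (real^'n)"
  assumes "z \<in> cyl" "u \<in> cyl" "fst z < lam" "fst u < lam" "z \<noteq> u" "0 \<le> \<gamma>"
  shows "kernelK \<gamma> z (reflect lam u) < kernelK \<gamma> z u"
proof -
  have unit: "norm (snd z) = 1" "norm (snd u) = 1"
    using assms(1,2) by (auto simp: cyl_def)
  have "snd z \<bullet> snd u < cosh (fst z - fst u)"
  proof (cases "fst z = fst u")
    case True
    then have "snd z \<noteq> snd u" using assms(5) by (simp add: prod_eq_iff)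
    then have "snd z \<bullet> snd u < 1"
      using inner_unit_le_1[OF unit] inner_unit_eq_1_iff[OF unit] by fastforce
    then show ?thesis using cosh_real_ge_1 by (smt (verit))
  next
    case False
    then have "cosh 0 < cosh \<bar>fst z - fst u\<bar>"
      by (subst cosh_real_nonneg_less_iff) auto
    then show ?thesis using inner_unit_le_1[OF unit] by simp
  qed
  moreover have "cosh \<bar>fst z - fst u\<bar> < cosh \<bar>fst z - (2 * lam - fst u)\<bar>"
    using assms(3,4) by (subst cosh_real_nonneg_less_iff) auto
  moreover have "0 < real CARD('n) + 2 * \<gamma>"
    using assms(6) by (simp add: add_pos_nonneg)
  ultimately show ?thesis
    unfolding kernelK_eq_cosh by (intro powr_less_mono2_neg) (auto simp: reflect_def)
qed

lemma dist_le_dist_reflect: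
  fixes z u :: "real \<times> (real^'n)"
  assumes "fst z \<le> lam" "fst u \<le> lam"
  shows "dist z u \<le> dist z (reflect lam u)"
proof -
  have "\<bar>fst z - fst u\<bar> ^ 2 \<le> \<bar>fst z - (2 * lam - fst u)\<bar> ^ 2"
    using assms by (intro power_mono) auto
  then show ?thesis
    by (cases z, cases u) (simp add: reflect_def dist_Pair_Pair dist_real_def)
qed

lemma kernelK_reflect_bounded:
  fixes z :: "real \<times> (real^'n)"
  assumes "z \<in> Sigma_lam lam" "0 \<le> \<gamma>"
  shows "\<exists>M. \<forall>u\<in>Sigma_lam lam. kernelK \<gamma> z (reflect lam u) \<le> M"
proof -
  have "kernelK \<gamma> z (reflect lam u) \<le> (2 * (cosh (lam - fst z) - 1)) powr (- (real CARD('n) + 2 * \<gamma>) / 2)"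
    if "u \<in> Sigma_lam lam" for u
    using assms that by (intro kernelK_le_of_fst_dist) (auto simp: Sigma_lam_def reflect_def cyl_def)
  then show ?thesis by blast
qed

section \<open>Folding the principal value across the plane t = lam\<close>

(* Pairing each u in Sigma_lam with its mirror image turns the truncated integral of K(z,.) v over
   the cylinder into the integral of this function (lemma pv_trunc_eq_folded). *)
definition folded_integrand ::
    "real \<Rightarrow> real \<Rightarrow> (real \<times> (real^'n) \<Rightarrow> real) \<Rightarrow> real \<times> (real^'n) \<Rightarrow> real \<Rightarrow> real \<times> (real^'n) \<Rightarrow> real" where
  "folded_integrand \<gamma> lam v z \<epsilon> u = indicator (Sigma_lam lam) u *
     (indicator {w. \<epsilon> < dist z w} u * kernelK \<gamma> z u
      - indicator {w. \<epsilon> < dist z w} (reflect lam u) * kernelK \<gamma> z (reflect lam u)) * v u"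

lemma pv_trunc_eq_folded:
  assumes "v z = 0" "\<And>u. u \<in> cyl \<Longrightarrow> v (reflect lam u) = - v u"
    and "set_integrable cyl_measure {w. \<epsilon> < dist z w} (pv_integrand \<gamma> v z)"
  shows "integrable cyl_measure (folded_integrand \<gamma> lam v z \<epsilon>)"
    and "pv_trunc \<gamma> v z \<epsilon> = - integral\<^sup>L cyl_measure (folded_integrand \<gamma> lam v z \<epsilon>)"
proof -
  define h where "h w = indicator {w. \<epsilon> < dist z w} w * kernelK \<gamma> z w * v w" for w
  have minus_h: "(\<lambda>w. indicator {w. \<epsilon> < dist z w} w *\<^sub>R pv_integrand \<gamma> v z w) = (\<lambda>w. - h w)"
    by (simp add: h_def pv_integrand_def assms(1) fun_eq_iff)
  have h: "integrable cyl_measure h"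
    using assms(3) unfolding set_integrable_def minus_h by simp
  have fold: "(\<lambda>u. indicator (Sigma_lam lam) u * (h u + h (reflect lam u))) = folded_integrand \<gamma> lam v z \<epsilon>"
    by (auto simp: fun_eq_iff folded_integrand_def h_def indicator_def Sigma_lam_def assms(2) algebra_simps)
  show "integrable cyl_measure (folded_integrand \<gamma> lam v z \<epsilon>)"
    using integral_cyl_measure_fold(1)[OF h, of lam] unfolding fold .
  show "pv_trunc \<gamma> v z \<epsilon> = - integral\<^sup>L cyl_measure (folded_integrand \<gamma> lam v z \<epsilon>)"
    using integral_cyl_measure_fold(2)[OF h, of lam]
    unfolding fold pv_trunc_def set_lebesgue_integral_def minus_h by simp
qed

lemma folded_integrand_far:
  fixes z u :: "real \<times> (real^'n)"
  assumes "z \<in> Sigma_lam lam" "u \<in> Sigma_lam lam" "\<epsilon> < dist z u"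
  shows "folded_integrand \<gamma> lam v z \<epsilon> u = (kernelK \<gamma> z u - kernelK \<gamma> z (reflect lam u)) * v u"
  using assms dist_le_dist_reflect[of z lam u]
  by (auto simp: folded_integrand_def Sigma_lam_def)

lemma folded_integrand_far_pos:
  fixes z u :: "real \<times> (real^'n)"
  assumes "z \<in> Sigma_lam lam" "u \<in> Sigma_lam lam" "0 \<le> \<epsilon>" "\<epsilon> < dist z u" "0 \<le> \<gamma>" "0 < v u"
  shows "0 < folded_integrand \<gamma> lam v z \<epsilon> u"
proof -
  have "kernelK \<gamma> z (reflect lam u) < kernelK \<gamma> z u"
    using assms by (intro kernelK_reflect_less) (auto simp: Sigma_lam_def)
  then show ?thesis
    using assms by (simp add: folded_integrand_far)
qed

lemma folded_integrand_far_nonneg: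
  fixes z u :: "real \<times> (real^'n)"
  assumes "z \<in> Sigma_lam lam" "\<And>w. w \<in> Sigma_lam lam \<Longrightarrow> 0 \<le> v w"
    and "0 \<le> \<epsilon>" "\<epsilon> < dist z u" "0 \<le> \<gamma>"
  shows "0 \<le> folded_integrand \<gamma> lam v z \<epsilon> u"
proof (cases "u \<in> Sigma_lam lam \<and> 0 < v u")
  case True
  then show ?thesis
    using folded_integrand_far_pos[of z lam u \<epsilon> \<gamma> v] assms by simp
next
  case False
  with assms(2) have "indicator (Sigma_lam lam) u = (0::real) \<or> v u = 0"
    by (metis indicator_simps(2) less_eq_real_def)
  then show ?thesis by (auto simp: folded_integrand_def)
qed

lemma folded_integrand_lower_bound:
  fixes z u :: "real \<times> (real^'n)"
  assumes z: "z \<in> Sigma_lam lam" and u: "u \<in> cyl" and "0 \<le> \<gamma>"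
    and v_nonneg: "\<And>w. w \<in> Sigma_lam lam \<Longrightarrow> 0 \<le> v w"
    and \<epsilon>: "0 < \<epsilon>" "\<epsilon> \<le> \<epsilon>0"
    and M: "\<And>w. w \<in> Sigma_lam lam \<Longrightarrow> kernelK \<gamma> z (reflect lam w) \<le> M"
    and B: "0 \<le> B" "\<And>w. w \<in> cyl_slab (fst z) \<epsilon> \<Longrightarrow> v w \<le> B"
  shows "indicator {w. \<epsilon>0 < dist z w} u * folded_integrand \<gamma> lam v z \<epsilon>0 u
      - M * B * indicator (cyl_slab (fst z) \<epsilon>) u \<le> folded_integrand \<gamma> lam v z \<epsilon> u"
proof -
  have "0 \<le> M"
    using M[OF z] kernelK_nonneg[of \<gamma> z "reflect lam z"] by linarith
  then have MB: "0 \<le> M * B * indicator (cyl_slab (fst z) \<epsilon>) u"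
    using B(1) by simp
  consider (outside) "u \<notin> Sigma_lam lam" | (far) "u \<in> Sigma_lam lam" "\<epsilon>0 < dist z u"
    | (mid) "\<epsilon> < dist z u" "dist z u \<le> \<epsilon>0" | (near) "u \<in> Sigma_lam lam" "dist z u \<le> \<epsilon>"
    by linarith
  then show ?thesis
  proof cases
    case outside
    then show ?thesis
      using MB by (simp add: folded_integrand_def)
  next
    case far
    then show ?thesis
      using folded_integrand_far[OF z far(1)] \<epsilon> MB by simp
  next
    case mid
    then show ?thesis
      using folded_integrand_far_nonneg[of z lam v \<epsilon> u \<gamma>] z v_nonneg mid(1) assms(3) \<epsilon> MB by simp
  next
    case near
    then have "u \<in> cyl_slab (fst z) \<epsilon>"
      using mem_cyl_slab[OF u] by blast
    then have "kernelK \<gamma> z (reflect lam u) * v u \<le> M * B"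
      using M[OF near(1)] B(2) v_nonneg[OF near(1)] kernelK_nonneg \<open>0 \<le> M\<close> by (intro mult_mono) auto
    then show ?thesis
      using near \<epsilon> MB \<open>u \<in> cyl_slab (fst z) \<epsilon>\<close> v_nonneg[OF near(1)] kernelK_nonneg[of \<gamma> z "reflect lam u"]
      by (auto simp: folded_integrand_def indicator_def)
  qed
qed

lemma integral_folded_integrand_far_pos:
  fixes z z1 :: "real \<times> (real^'n)"
  assumes "0 \<le> \<gamma>" "continuous_on cyl v" "\<And>w. w \<in> Sigma_lam lam \<Longrightarrow> 0 \<le> v w"
    and z: "z \<in> Sigma_lam lam" and z1: "z1 \<in> Sigma_lam lam" "0 < v z1"
    and \<epsilon>0: "0 \<le> \<epsilon>0" "\<epsilon>0 < dist z z1"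
    and int: "integrable cyl_measure (folded_integrand \<gamma> lam v z \<epsilon>0)"
  defines "P \<equiv> \<lambda>u. indicator {w. \<epsilon>0 < dist z w} u * folded_integrand \<gamma> lam v z \<epsilon>0 u"
  shows "integrable cyl_measure P" and "0 < integral\<^sup>L cyl_measure P"
proof -
  let ?M = "cyl_measure :: (real \<times> (real^'n)) measure"
  have "P = (\<lambda>u. indicator {w \<in> space ?M. \<epsilon>0 < dist z w} u * folded_integrand \<gamma> lam v z \<epsilon>0 u)"
    by (auto simp: P_def fun_eq_iff folded_integrand_def indicator_def Sigma_lam_def)
  moreover have "{w \<in> space ?M. \<epsilon>0 < dist z w} \<in> sets ?M"
    by measurable
  ultimately show P_int: "integrable ?M P"
    using integrable_mult_indicator[OF _ int] by simp
  obtain \<rho> where \<rho>: "0 < \<rho>" "\<And>u. u \<in> cyl \<Longrightarrow> dist u z1 < \<rho> \<Longrightarrow> dist (v u) (v z1) < v z1"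
    using assms(2) z1 unfolding continuous_on_iff Sigma_lam_def by blast
  define r where "r = min (\<rho> / 2) (min ((lam - fst z1) / 2) ((dist z z1 - \<epsilon>0) / 2))"
  have r: "0 < r" using \<rho>(1) z1(1) \<epsilon>0 by (auto simp: r_def Sigma_lam_def)
  have r_le: "2 * r \<le> \<rho>" "2 * r \<le> lam - fst z1" "2 * r \<le> dist z z1 - \<epsilon>0"
    unfolding r_def by (simp_all add: min_def)
  have box: "u \<in> Sigma_lam lam \<and> 0 < v u \<and> \<epsilon>0 < dist z u" if "u \<in> cyl_box z1 r" for u
  proof -
    have u: "u \<in> cyl" "dist z1 u < 2 * r"
      using that cyl_box_subset[of z1 r] by auto
    then have "dist (v u) (v z1) < v z1"
      using \<rho>(2)[of u] r_le by (auto simp: dist_commute)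
    then have "0 < v u"
      by (simp add: dist_real_def)
    moreover have "fst u < lam"
      using u(2) dist_fst_le[of z1 u] r_le by (auto simp: dist_real_def)
    moreover have "\<epsilon>0 < dist z u"
      using u(2) dist_triangle[of z z1 u] r_le by (simp add: dist_commute)
    ultimately show ?thesis using u(1) by (simp add: Sigma_lam_def)
  qed
  show "0 < integral\<^sup>L ?M P"
  proof (rule integral_pos_of_pos_on[OF P_int _ cyl_box_in_sets emeasure_cyl_box_pos])
    show "0 \<le> P u" for u
      using folded_integrand_far_nonneg[OF z assms(3) \<epsilon>0(1) _ assms(1)] by (simp add: P_def indicator_def)
    show "0 < P u" if "u \<in> cyl_box z1 r" for u
      using box[OF that] folded_integrand_far_pos[OF z _ \<epsilon>0(1) _ assms(1)] by (simp add: P_def)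
  qed (use z1 r in \<open>auto simp: Sigma_lam_def\<close>)
qed

lemma integral_folded_integrand_lower_bound:
  fixes z :: "real \<times> (real^'n)"
  assumes "z \<in> Sigma_lam lam" "0 \<le> \<gamma>" "\<And>w. w \<in> Sigma_lam lam \<Longrightarrow> 0 \<le> v w"
    and \<epsilon>: "0 < \<epsilon>" "\<epsilon> \<le> \<epsilon>0"
    and M: "\<And>w. w \<in> Sigma_lam lam \<Longrightarrow> kernelK \<gamma> z (reflect lam w) \<le> M"
    and B: "0 \<le> B" "\<And>w. w \<in> cyl_slab (fst z) \<epsilon> \<Longrightarrow> v w \<le> B"
    and int: "integrable cyl_measure (folded_integrand \<gamma> lam v z \<epsilon>)"
    and P_int: "integrable cyl_measure (\<lambda>u. indicator {w. \<epsilon>0 < dist z w} u * folded_integrand \<gamma> lam v z \<epsilon>0 u)"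
  shows "(LINT u|cyl_measure. indicator {w. \<epsilon>0 < dist z w} u * folded_integrand \<gamma> lam v z \<epsilon>0 u)
      - M * B * (2 * \<epsilon> * measure sphere_measure (sphere (0::real^'n) 1))
    \<le> integral\<^sup>L cyl_measure (folded_integrand \<gamma> lam v z \<epsilon>)"
proof -
  let ?M = "cyl_measure :: (real \<times> (real^'n)) measure"
  let ?P = "\<lambda>u. indicator {w. \<epsilon>0 < dist z w} u * folded_integrand \<gamma> lam v z \<epsilon>0 u"
  let ?slab = "cyl_slab (fst z) \<epsilon> :: (real \<times> (real^'n)) set"
  have slab_int: "integrable ?M (indicator ?slab :: _ \<Rightarrow> real)"
    using cyl_slab_in_sets emeasure_cyl_slab_finite[of \<epsilon> "fst z"] \<epsilon>(1)
    by (intro integrable_real_indicator) auto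
  have "integral\<^sup>L ?M (\<lambda>u. ?P u - M * B * indicator ?slab u) \<le> integral\<^sup>L ?M (folded_integrand \<gamma> lam v z \<epsilon>)"
    using P_int slab_int int folded_integrand_lower_bound[OF assms(1) _ assms(2,3) \<epsilon> M B]
    by (intro integral_mono) auto
  moreover have "integral\<^sup>L ?M (\<lambda>u. ?P u - M * B * indicator ?slab u) =
      integral\<^sup>L ?M ?P - M * B * measure ?M ?slab"
    using P_int slab_int cyl_slab_in_sets[of "fst z" \<epsilon>] by (simp add: Int_absorb2[OF cyl_slab_subset])
  ultimately show ?thesis
    using \<epsilon>(1) by (simp add: measure_cyl_slab)
qed

section \<open>The strong maximum principle\<close>

lemma eventually_pv_trunc_le_neg:
  fixes z z1 :: "real \<times> (real^'n)"
  assumes "0 \<le> \<gamma>" "continuous_on cyl v" "\<And>w. w \<in> Sigma_lam lam \<Longrightarrow> 0 \<le> v w"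
    and antisym: "\<And>u. u \<in> cyl \<Longrightarrow> v (reflect lam u) = - v u"
    and z: "z \<in> Sigma_lam lam" "v z = 0" and z1: "z1 \<in> Sigma_lam lam" "0 < v z1"
    and int: "\<And>\<epsilon>. 0 < \<epsilon> \<Longrightarrow> set_integrable cyl_measure {w. \<epsilon> < dist z w} (pv_integrand \<gamma> v z)"
  shows "\<exists>\<delta>>0. \<forall>\<^sub>F \<epsilon> in at_right 0. pv_trunc \<gamma> v z \<epsilon> \<le> - \<delta>"
proof -
  let ?M = "cyl_measure :: (real \<times> (real^'n)) measure"
  have folded: "integrable ?M (folded_integrand \<gamma> lam v z \<epsilon>)"
      "pv_trunc \<gamma> v z \<epsilon> = - integral\<^sup>L ?M (folded_integrand \<gamma> lam v z \<epsilon>)" if "0 < \<epsilon>" for \<epsilon>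
    using pv_trunc_eq_folded[of v z lam, OF z(2) antisym int[OF that]] by auto
  define \<epsilon>0 where "\<epsilon>0 = dist z z1 / 2"
  have \<epsilon>0: "0 < \<epsilon>0" "\<epsilon>0 < dist z z1"
    using z z1 by (auto simp: \<epsilon>0_def)
  let ?P = "\<lambda>u. indicator {w. \<epsilon>0 < dist z w} u * folded_integrand \<gamma> lam v z \<epsilon>0 u"
  define \<delta> where "\<delta> = integral\<^sup>L ?M ?P"
  have "integrable ?M ?P" "0 < \<delta>"
    using integral_folded_integrand_far_pos[OF assms(1-3) z(1) z1 less_imp_le[OF \<epsilon>0(1)] \<epsilon>0(2) folded(1)[OF \<epsilon>0(1)]]
    by (simp_all add: \<delta>_def)
  obtain M where M: "\<And>w. w \<in> Sigma_lam lam \<Longrightarrow> kernelK \<gamma> z (reflect lam w) \<le> M"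
    using kernelK_reflect_bounded[OF z(1) assms(1)] by blast
  obtain B where B: "0 \<le> B" "\<And>w. w \<in> cyl_slab (fst z) 1 \<Longrightarrow> v w \<le> B"
    using bounded_above_on_cyl_slab[OF assms(2)] by blast
  define C where "C = M * B * (2 * measure sphere_measure (sphere (0::real^'n) 1))"
  have bound: "pv_trunc \<gamma> v z \<epsilon> \<le> - (\<delta> / 2)" if "0 < \<epsilon> \<and> \<epsilon> < min \<epsilon>0 1" "C * \<epsilon> < \<delta> / 2" for \<epsilon>
  proof -
    have "v w \<le> B" if "w \<in> cyl_slab (fst z) \<epsilon>" for w
      using B(2) that \<open>0 < \<epsilon> \<and> \<epsilon> < min \<epsilon>0 1\<close> by (auto simp: cyl_slab_def)
    then show ?thesis
      using that integral_folded_integrand_lower_bound[OF z(1) assms(1,3) _ _ M B(1) _ folded(1) \<open>integrable ?M ?P\<close>]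
        folded(2)
      by (fastforce simp: C_def \<delta>_def algebra_simps)
  qed
  have "\<forall>\<^sub>F \<epsilon> in at_right 0. 0 < \<epsilon> \<and> \<epsilon> < min \<epsilon>0 1"
    using \<epsilon>0(1) by (intro eventually_at_rightI[of _ "min \<epsilon>0 1"]) auto
  moreover have "\<forall>\<^sub>F \<epsilon> in at_right 0. C * \<epsilon> < \<delta> / 2"
    using \<open>0 < \<delta>\<close> by (intro order_tendstoD(2)[of _ 0]) (auto intro!: tendsto_eq_intros)
  ultimately have "\<forall>\<^sub>F \<epsilon> in at_right 0. pv_trunc \<gamma> v z \<epsilon> \<le> - (\<delta> / 2)"
    by eventually_elim (rule bound)
  then show ?thesis
    using \<open>0 < \<delta>\<close> by (intro exI[of _ "\<delta> / 2"]) simp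
qed

lemma varsigma_pos: "0 < \<gamma> \<Longrightarrow> \<gamma> < 1 \<Longrightarrow> 0 < varsigma n \<gamma>"
  unfolding varsigma_def by (intro mult_pos_pos divide_pos_pos Gamma_real_pos) auto

lemma Pgamma_at_neg:
  fixes v :: "real \<times> (real^'n) \<Rightarrow> real"
  assumes "Pgamma_at \<gamma> v z L" "0 < \<gamma>" "\<gamma> < 1" "v z = 0"
    and "0 < \<delta>" "\<forall>\<^sub>F \<epsilon> in at_right 0. pv_trunc \<gamma> v z \<epsilon> \<le> - \<delta>"
  shows "L < 0"
proof -
  obtain I where I: "((\<lambda>\<epsilon>. pv_trunc \<gamma> v z \<epsilon>) \<longlongrightarrow> I) (at_right 0)"
    and L: "L = varsigma CARD('n) \<gamma> * I"
    using assms(1,4) unfolding Pgamma_at_def by auto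
  have "I \<le> - \<delta>"
    using I assms(6) by (intro tendsto_upperbound) auto
  then show ?thesis
    using L assms(5) varsigma_pos[OF assms(2,3)] by (simp add: mult_pos_neg)
qed

lemma exists_pos_in_Sigma_lam:
  fixes v :: "real \<times> (real^'n) \<Rightarrow> real"
  assumes "\<And>w. w \<in> Sigma_lam lam \<Longrightarrow> 0 \<le> v w" "\<And>u. u \<in> cyl \<Longrightarrow> v (reflect lam u) = - v u"
    and "z \<in> cyl" "v z \<noteq> 0"
  shows "\<exists>z1\<in>Sigma_lam lam. 0 < v z1"
proof (cases "fst z" lam rule: linorder_cases)
  case less
  then have "z \<in> Sigma_lam lam"
    using assms(3) by (simp add: Sigma_lam_def)
  then show ?thesis
    using assms(1)[of z] assms(4) by force
next
  case equal
  then have "reflect lam z = z" by (simp add: reflect_def prod_eq_iff)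
  then show ?thesis using assms(2)[OF assms(3)] assms(4) by simp
next
  case greater
  then have "reflect lam z \<in> Sigma_lam lam"
    using assms(3) by (auto simp: Sigma_lam_def reflect_def cyl_def)
  then show ?thesis
    using assms(1)[of "reflect lam z"] assms(2)[OF assms(3)] assms(4) by force
qed

theorem lemma5p2:
  fixes v :: "real \<times> (real^'n) \<Rightarrow> real" and f :: "real \<Rightarrow> real"
    and \<gamma> lam :: real
  assumes "CARD('n) \<ge> 2"
    and "0 < \<gamma>" and "\<gamma> < 1"
    and "\<And>s. s \<ge> 0 \<Longrightarrow> f s \<ge> 0"
    and "continuous_on cyl v"
    and "\<And>z. z \<in> Sigma_lam lam \<Longrightarrow> Pgamma_at \<gamma> v z (f (v z))"
    and "\<And>z. z \<in> Sigma_lam lam \<Longrightarrow> v z \<ge> 0"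
    and "\<And>z. z \<in> cyl \<Longrightarrow> v (reflect lam z) = - v z"
  shows "(\<forall>z\<in>cyl. v z = 0) \<or> (\<forall>z\<in>Sigma_lam lam. v z > 0)"
proof (rule ccontr)
  assume "\<not> ?thesis"
  then obtain z z1 where z: "z \<in> Sigma_lam lam" "v z = 0" and z1: "z1 \<in> Sigma_lam lam" "0 < v z1"
    using exists_pos_in_Sigma_lam[of lam v] assms(7,8) by (metis order_less_le)
  have P: "Pgamma_at \<gamma> v z (f 0)"
    using assms(6)[OF z(1)] z(2) by simp
  then obtain \<delta> where "0 < \<delta>" "\<forall>\<^sub>F \<epsilon> in at_right 0. pv_trunc \<gamma> v z \<epsilon> \<le> - \<delta>"
    using eventually_pv_trunc_le_neg[of \<gamma> v lam z z1] assms(2,5,7,8) z z1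
    unfolding Pgamma_at_def by auto
  then have "f 0 < 0"
    using Pgamma_at_neg[OF P assms(2,3) z(2)] by blast
  then show False
    using assms(4)[of 0] by simp
qed

end
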